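(* Let $A\subset\mathbb{R}^N$ be nonempty and closed, and let the triple $(U,f,l)$ satisfy condition $(h)''$ relative to $A$. Define $H:[0,\infty)\times\mathbb{R}^N\times\mathbb{R}^N\to\mathbb{R}$ by $$H(t,x,p)=\sup_{u\in U(t)}\{\langle p,f(t,x,u)\rangle-l(t,x,u)\}.$$ Then $H$ satisfies condition $(h)''_H$ relative to $A$. Moreover, if $(U,f,l)$ satisfies (OPC), then $H$ satisfies $(\mathrm{OPC})_H$. Additionally, $(U,f,l)$ is an epigraphical representation of $H$, i.e. for all $t\in[0,\infty)$ and $x\in\mathbb{R}^N$, $$\mathrm{gph}\,H^*(t,x,\cdot)\subset (f,l)(t,x,U(t))\subset \mathrm{epi}\,H^*(t,x,\cdot),$$ where $(f,l)(t,x,u)=(f(t,x,u),l(t,x,u))$.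
   Context: $\mathbb{B}$ denotes the closed unit ball, $\mathbb{B}(x,r)$ the closed ball of radius $r$ centered at $x$, $\mathbb{S}$ the unit sphere, $\mathrm{bd}$ the boundary. For $H$ convex in the last variable, $H^*(t,x,v)=\sup_{p\in\mathbb{R}^N}\{\langle v,p\rangle-H(t,x,p)\}\in\mathbb{R}\cup\{+\infty\}$, $\mathrm{dom}\,H^*(t,x,\cdot)=\{v:H^*(t,x,v)<+\infty\}$, $\mathrm{gph}$ and $\mathrm{epi}$ denote graph and epigraph (over the effective domain). $\mathscr{L}_{\rm loc}$ is the set of $\varphi\in L^1_{\rm loc}([0,\infty);[0,\infty))$ with $\lim_{\sigma\to0}\theta_\varphi(\sigma)=0$, where $\theta_\varphi(\sigma)=\sup\{\int_I\varphi(\tau)d\tau : I$ a compact subinterval of $[0,\infty)$ of length $\le\sigma\}$. Condition $(h)''$ for $(U,f,l)$ relative to $A$: $U:[0,\infty)\rightsquigarrow\mathbb{R}^M$ is a measurable set-valued map with nonempty closed images, $f:[0,\infty)\times\mathbb{R}^N\times\mathbb{R}^M\to\mathbb{R}^N$, $l:[0,\infty)\times\mathbb{R}^N\times\mathbb{R}^M\to\mathbb{R}$, and: (h1) $f,l$ are Lebesgue measurable in $t$ for all $(x,u)$, continuous in $(x,u)$ for all $t$, and there is $\phi\in L^1([0,\infty);\mathbb{R})$ with $l(t,x,u)\ge\phi(t)$ for all $t,x,u$; (h2) $|f(t,x,u)|+|l(t,x,u)|\le c(t)(1+|x|)$ for all $t$, $x$, $u\in U(t)$, for some $c\in L^1_{\rm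 loc}([0,\infty);[0,\infty))$; (h3) for each $t$, the set-valued map $x\rightsquigarrow(f,l)(t,x,U(t))$ is continuous (in the Hausdorff sense) with closed images; (h4) for all $t,x$ the set $\{(f(t,x,u),l(t,x,u)+r):u\in U(t),r\ge0\}$ is convex; (h5) $|f(t,x,u)|+|l(t,x,u)|\le q(t)$ for all $t$, $x\in\mathrm{bd}A$, $u\in U(t)$, for some $q\in\mathscr{L}_{\rm loc}$; (h6) $|f(t,x,u)-f(t,y,u)|+|l(t,x,u)-l(t,y,u)|\le k(t)|x-y|$ for all $t$, $x,y$, $u\in U(t)$, for some $k\in\mathscr{L}_{\rm loc}$. Condition $(h)''_H$ for $H:[0,\infty)\times\mathbb{R}^N\times\mathbb{R}^N\to\mathbb{R}$ relative to $A$: (H1) $H$ is measurable in $t$, continuous in $x$, convex in $p$; (H2) $H(t,x,0)\le-\phi(t)$ for all $t,x$, for some $\phi\in L^1([0,\infty);\mathbb{R})$; and there exist $\lambda:[0,\infty)\times\mathbb{R}^N\to[0,\infty)$ measurable in $t$ and continuous in $x$, $c\in L^1_{\rm loc}([0,\infty);[0,\infty))$ and $k,q\in\mathscr{L}_{\rm loc}$ such that: (H3) $\lambda(t,x)\le c(t)(1+|x|)$ for all $x$ and $\lambda(t,x)\le q(t)$ for all $x\in\mathrm{bd}A$, for all $t$; (H4) $|\lambda(t,x)-\lambda(t,y)|\le k(t)|x-y|$; (H5) $|H(t,x,p)-H(t,y,p)|\le k(t)(1+|p|)|x-y|$; (H6) $|H(t,x,p)-H(t,x,q)|\le\lambda(t,x)|p-q|$;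 (H7) $|H^*(t,x,v)|\le\lambda(t,x)$ for all $v\in\mathrm{dom}\,H^*(t,x,\cdot)$ (all for all $t\ge0$ and $x,y,p,q\in\mathbb{R}^N$). Normal cones: $T_A(x)=\{\zeta:\liminf_{\tau\to0+}\mathrm{dist}(x+\tau\zeta,A)/\tau=0\}$; regular normal cone $N_A(x)=\{\xi:\langle\zeta,\xi\rangle\le0\ \forall\zeta\in T_A(x)\}$; limiting normal cone $\mathbb{N}_A(x)=\{\xi:\exists x_n\to x$ with $x_n\in A$, $\xi_n\to\xi$, $\xi_n\in N_A(x_n)\}$. For $y\in\mathbb{R}^N$, $\eta>0$: $\mathbb{N}^1_{y,\eta}=\{n\in\mathbb{S}: n\in\mathrm{cl}\,\mathrm{conv}\,\mathbb{N}_A(x)$ for some $x\in\mathrm{bd}A\cap\mathbb{B}(y,\eta)\}$. (OPC): there exist $\eta>0,r>0,M\ge0$ such that for almost all $t\ge0$, any $y\in\mathrm{bd}A+\eta\mathbb{B}$ and any $v\in f(t,y,U(t))$ with $\inf_{n\in\mathbb{N}^1_{y,\eta}}\langle n,v\rangle\le0$, there is $w\in f(t,y,U(t))\cap\mathbb{B}(v,M)$ with $\inf_{n\in\mathbb{N}^1_{y,\eta}}\min\{\langle n,w\rangle,\langle n,w-v\rangle\}\ge r$. $(\mathrm{OPC})_H$ is the same condition with $f(t,y,U(t))$ replaced by $\mathrm{dom}\,H^*(t,y,\cdot)$ (both for $v$ and $w$). *)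

theory Defs
  imports "HOL-Analysis.Analysis" "HOL-Library.Extended_Real"
begin

definition L1_pos :: "(real \<Rightarrow> real) \<Rightarrow> bool" where
  "L1_pos \<phi> \<longleftrightarrow> integrable (lebesgue_on {0..}) \<phi>"

definition L1loc_nonneg :: "(real \<Rightarrow> real) \<Rightarrow> bool" where
  "L1loc_nonneg c \<longleftrightarrow> (\<forall>t\<ge>0. 0 \<le> c t) \<and> (\<forall>T\<ge>0. integrable (lebesgue_on {0..T}) c)"

definition theta :: "(real \<Rightarrow> real) \<Rightarrow> real \<Rightarrow> ereal" where
  "theta \<phi> \<sigma> = (SUP ab \<in> {(a,b). 0 \<le> a \<and> a \<le> b \<and> b - a \<le> \<sigma>}.
                    ereal (integral\<^sup>L (lebesgue_on {fst ab..snd ab}) \<phi>))"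

definition Lscr_loc :: "(real \<Rightarrow> real) \<Rightarrow> bool" where
  "Lscr_loc \<phi> \<longleftrightarrow> L1loc_nonneg \<phi> \<and> ((theta \<phi>) \<longlongrightarrow> (0::ereal)) (at_right 0)"

definition measurable_setvalued :: "(real \<Rightarrow> 'b::euclidean_space set) \<Rightarrow> bool" where
  "measurable_setvalued U \<longleftrightarrow>
     (\<forall>G. open G \<longrightarrow> {t \<in> {0..}. U t \<inter> G \<noteq> {}} \<in> sets lebesgue)"

definition hausdorff_continuous :: "('a::metric_space \<Rightarrow> 'c::metric_space set) \<Rightarrow> bool" where
  "hausdorff_continuous F \<longleftrightarrow>
     (\<forall>x. \<forall>\<epsilon>>0. \<exists>\<delta>>0. \<forall>y. dist y x < \<delta> \<longrightarrow>
        (\<forall>z\<in>F y. \<exists>w\<in>F x. dist z w \<le> \<epsilon>) \<and> (\<forall>z\<in>F x. \<exists>w\<in>F y. dist z w \<le> \<epsilon>))"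

definition cond_h :: "'a::euclidean_space set \<Rightarrow> (real \<Rightarrow> 'b::euclidean_space set)
     \<Rightarrow> (real \<Rightarrow> 'a \<Rightarrow> 'b \<Rightarrow> 'a) \<Rightarrow> (real \<Rightarrow> 'a \<Rightarrow> 'b \<Rightarrow> real) \<Rightarrow> bool" where
  "cond_h A U f l \<longleftrightarrow>
     measurable_setvalued U \<and> (\<forall>t\<ge>0. U t \<noteq> {} \<and> closed (U t)) \<and>
     \<comment> \<open>(h1)\<close>
     (\<forall>x u. (\<lambda>t. f t x u) \<in> borel_measurable (lebesgue_on {0..}) \<and>
            (\<lambda>t. l t x u) \<in> borel_measurable (lebesgue_on {0..})) \<and>
     (\<forall>t\<ge>0. continuous_on UNIV (\<lambda>(x,u). f t x u) \<and> continuous_on UNIV (\<lambda>(x,u). l t x u)) \<and>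
     (\<exists>\<phi>. L1_pos \<phi> \<and> (\<forall>t\<ge>0. \<forall>x u. \<phi> t \<le> l t x u)) \<and>
     \<comment> \<open>(h2)\<close>
     (\<exists>c. L1loc_nonneg c \<and>
        (\<forall>t\<ge>0. \<forall>x. \<forall>u\<in>U t. norm (f t x u) + \<bar>l t x u\<bar> \<le> c t * (1 + norm x))) \<and>
     \<comment> \<open>(h3)\<close>
     (\<forall>t\<ge>0. hausdorff_continuous (\<lambda>x. (\<lambda>u. (f t x u, l t x u)) ` U t) \<and>
            (\<forall>x. closed ((\<lambda>u. (f t x u, l t x u)) ` U t))) \<and>
     \<comment> \<open>(h4)\<close>
     (\<forall>t\<ge>0. \<forall>x. convex {(f t x u, l t x u + r) | u r. u \<in> U t \<and> r \<ge> 0}) \<and>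
     \<comment> \<open>(h5)\<close>
     (\<exists>q. Lscr_loc q \<and>
        (\<forall>t\<ge>0. \<forall>x\<in>frontier A. \<forall>u\<in>U t. norm (f t x u) + \<bar>l t x u\<bar> \<le> q t)) \<and>
     \<comment> \<open>(h6)\<close>
     (\<exists>k. Lscr_loc k \<and>
        (\<forall>t\<ge>0. \<forall>x y. \<forall>u\<in>U t.
           norm (f t x u - f t y u) + \<bar>l t x u - l t y u\<bar> \<le> k t * norm (x - y)))"

definition hamiltonian :: "(real \<Rightarrow> 'b set) \<Rightarrow> (real \<Rightarrow> 'a::euclidean_space \<Rightarrow> 'b \<Rightarrow> 'a)
     \<Rightarrow> (real \<Rightarrow> 'a \<Rightarrow> 'b \<Rightarrow> real) \<Rightarrow> real \<Rightarrow> 'a \<Rightarrow> 'a \<Rightarrow> real" where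
  "hamiltonian U f l t x p = (SUP u \<in> U t. p \<bullet> f t x u - l t x u)"

definition Hstar :: "(real \<Rightarrow> 'a::euclidean_space \<Rightarrow> 'a \<Rightarrow> real) \<Rightarrow> real \<Rightarrow> 'a \<Rightarrow> 'a \<Rightarrow> ereal" where
  "Hstar H t x v = (SUP p. ereal (v \<bullet> p - H t x p))"

definition dom_Hstar :: "(real \<Rightarrow> 'a::euclidean_space \<Rightarrow> 'a \<Rightarrow> real) \<Rightarrow> real \<Rightarrow> 'a \<Rightarrow> 'a set" where
  "dom_Hstar H t x = {v. Hstar H t x v < \<infinity>}"

definition gph_Hstar :: "(real \<Rightarrow> 'a::euclidean_space \<Rightarrow> 'a \<Rightarrow> real) \<Rightarrow> real \<Rightarrow> 'a \<Rightarrow> ('a \<times> real) set" where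
  "gph_Hstar H t x = {(v, r). Hstar H t x v = ereal r}"

definition epi_Hstar :: "(real \<Rightarrow> 'a::euclidean_space \<Rightarrow> 'a \<Rightarrow> real) \<Rightarrow> real \<Rightarrow> 'a \<Rightarrow> ('a \<times> real) set" where
  "epi_Hstar H t x = {(v, r). Hstar H t x v \<le> ereal r}"

definition cond_hH :: "'a::euclidean_space set \<Rightarrow> (real \<Rightarrow> 'a \<Rightarrow> 'a \<Rightarrow> real) \<Rightarrow> bool" where
  "cond_hH A H \<longleftrightarrow>
     \<comment> \<open>(H1)\<close>
     (\<forall>x p. (\<lambda>t. H t x p) \<in> borel_measurable (lebesgue_on {0..})) \<and>
     (\<forall>t\<ge>0. \<forall>p. continuous_on UNIV (\<lambda>x. H t x p)) \<and>
     (\<forall>t\<ge>0. \<forall>x. convex_on UNIV (H t x)) \<and>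
     \<comment> \<open>(H2)\<close>
     (\<exists>\<phi>. L1_pos \<phi> \<and> (\<forall>t\<ge>0. \<forall>x. H t x 0 \<le> - \<phi> t)) \<and>
     (\<exists>lam c k q.
        (\<forall>t\<ge>0. \<forall>x. 0 \<le> lam t x) \<and>
        (\<forall>x. (\<lambda>t. lam t x) \<in> borel_measurable (lebesgue_on {0..})) \<and>
        (\<forall>t\<ge>0. continuous_on UNIV (lam t)) \<and>
        L1loc_nonneg c \<and> Lscr_loc k \<and> Lscr_loc q \<and>
        \<comment> \<open>(H3)\<close>
        (\<forall>t\<ge>0. (\<forall>x. lam t x \<le> c t * (1 + norm x)) \<and> (\<forall>x\<in>frontier A. lam t x \<le> q t)) \<and>
        \<comment> \<open>(H4)\<close>
        (\<forall>t\<ge>0. \<forall>x y. \<bar>lam t x - lam t y\<bar> \<le> k t * norm (x - y)) \<and>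
        \<comment> \<open>(H5)\<close>
        (\<forall>t\<ge>0. \<forall>x y p. \<bar>H t x p - H t y p\<bar> \<le> k t * (1 + norm p) * norm (x - y)) \<and>
        \<comment> \<open>(H6)\<close>
        (\<forall>t\<ge>0. \<forall>x p q'. \<bar>H t x p - H t x q'\<bar> \<le> lam t x * norm (p - q')) \<and>
        \<comment> \<open>(H7)\<close>
        (\<forall>t\<ge>0. \<forall>x. \<forall>v\<in>dom_Hstar H t x. \<bar>Hstar H t x v\<bar> \<le> ereal (lam t x)))"

definition tangent_cone :: "'a::euclidean_space set \<Rightarrow> 'a \<Rightarrow> 'a set" where
  "tangent_cone A x = {\<zeta>. Liminf (at_right 0) (\<lambda>\<tau>::real. ereal (infdist (x + \<tau> *\<^sub>R \<zeta>) A / \<tau>)) = 0}"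

definition regular_normal_cone :: "'a::euclidean_space set \<Rightarrow> 'a \<Rightarrow> 'a set" where
  "regular_normal_cone A x = {\<xi>. \<forall>\<zeta>\<in>tangent_cone A x. \<zeta> \<bullet> \<xi> \<le> 0}"

definition limiting_normal_cone :: "'a::euclidean_space set \<Rightarrow> 'a \<Rightarrow> 'a set" where
  "limiting_normal_cone A x = {\<xi>. \<exists>xs \<xi>s. (\<forall>n. xs n \<in> A \<and> \<xi>s n \<in> regular_normal_cone A (xs n)) \<and>
                                     xs \<longlonglongrightarrow> x \<and> \<xi>s \<longlonglongrightarrow> \<xi>}"

definition N1 :: "'a::euclidean_space set \<Rightarrow> 'a \<Rightarrow> real \<Rightarrow> 'a set" where
  "N1 A y \<eta> = {n \<in> sphere 0 1. \<exists>x \<in> frontier A \<inter> cball y \<eta>.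
                   n \<in> closure (convex hull (limiting_normal_cone A x))}"

text \<open>(OPC) for a velocity set-valued map F(t,y): instantiated with F(t,y) = f(t,y,U(t)) gives (OPC),
  with F(t,y) = dom H*(t,y,.) gives (OPC)_H.  Infima over possibly empty sets are taken in ereal (inf of empty = +\<infinity>).\<close>
definition OPC :: "'a::euclidean_space set \<Rightarrow> (real \<Rightarrow> 'a \<Rightarrow> 'a set) \<Rightarrow> bool" where
  "OPC A F \<longleftrightarrow> (\<exists>\<eta>>0. \<exists>r>0. \<exists>M\<ge>0.
     AE t in lborel. t \<ge> 0 \<longrightarrow>
       (\<forall>y. (\<exists>z\<in>frontier A. dist y z \<le> \<eta>) \<longrightarrow>
          (\<forall>v\<in>F t y. (INF n\<in>N1 A y \<eta>. ereal (n \<bullet> v)) \<le> 0 \<longrightarrow>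
             (\<exists>w\<in>F t y \<inter> cball v M.
                (INF n\<in>N1 A y \<eta>. ereal (min (n \<bullet> w) (n \<bullet> (w - v)))) \<ge> ereal r))))"

end

theory Submission
  imports Defs
begin

text \<open>For fixed \<open>t\<close> and \<open>x\<close>, \<open>H(t,x,\<cdot>)\<close> is the supremum of the affine maps
  \<open>p \<mapsto> \<langle>p,v\<rangle> - r\<close> over the bounded set \<open>K = (f,l)(t,x,U(t))\<close>, hence convex, and the
  Lipschitz bounds \<open>(H4)\<close>--\<open>(H6)\<close> follow from \<open>|sup g - sup h| \<le> sup |g - h|\<close> with
  \<open>\<lambda>(t,x) = sup\<^sub>u |f(t,x,u)| + |l(t,x,u)|\<close>. Measurability in \<open>t\<close> holds because, for integrands
  continuous in \<open>u\<close>, a supremum over \<open>U(t)\<close> can be tested on a countable dense set.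
  The inequality \<open>H(p) \<ge> \<langle>p,f(u)\<rangle> - l(u)\<close> gives \<open>H\<^sup>*(f(u)) \<le> l(u)\<close>. Conversely, if
  \<open>H\<^sup>*(t,x,v) = r\<close> is finite, then \<open>(v,r)\<close> lies in the closed convex set \<open>K + {0} \<times> [0,\<infinity>)\<close>,
  since a separating hyperplane would give \<open>H\<^sup>*(v) > r\<close>; so \<open>(v,r) = (f(u), l(u) + s)\<close> with
  \<open>s \<ge> 0\<close>, and \<open>s = 0\<close> by the previous inequality. Hence \<open>dom H\<^sup>* = f(t,x,U(t))\<close>, which turns
  \<open>(OPC)\<close> into \<open>(OPC)\<^sub>H\<close>, and \<open>|H\<^sup>*| \<le> \<lambda>\<close>, which is \<open>(H7)\<close>.\<close>

section \<open>Suprema of families of real functions\<close>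

lemma cSUP_le_cSUP_add:
  fixes g h :: "'b \<Rightarrow> real"
  assumes "S \<noteq> {}" and "bdd_above (h ` S)" and "\<And>u. u \<in> S \<Longrightarrow> g u \<le> h u + L"
  shows "(SUP u\<in>S. g u) \<le> (SUP u\<in>S. h u) + L"
proof (rule cSUP_least[OF assms(1)])
  fix u assume "u \<in> S"
  then show "g u \<le> (SUP u\<in>S. h u) + L"
    using assms(3) cSUP_upper[OF _ assms(2)] by (meson add_right_mono order_trans)
qed

lemma abs_cSUP_diff_le:
  fixes g h :: "'b \<Rightarrow> real"
  assumes "S \<noteq> {}" and "bdd_above (g ` S)" and "bdd_above (h ` S)"
    and "\<And>u. u \<in> S \<Longrightarrow> \<bar>g u - h u\<bar> \<le> L"
  shows "\<bar>(SUP u\<in>S. g u) - (SUP u\<in>S. h u)\<bar> \<le> L"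
  using cSUP_le_cSUP_add[of S h g L] cSUP_le_cSUP_add[of S g h L] assms
  by (force simp: abs_le_iff)

lemma convex_on_cSUP:
  fixes g :: "'b \<Rightarrow> 'a::real_vector \<Rightarrow> real"
  assumes ne: "S \<noteq> {}" and bdd: "\<And>p. p \<in> C \<Longrightarrow> bdd_above ((\<lambda>u. g u p) ` S)"
    and cvx: "\<And>u. u \<in> S \<Longrightarrow> convex_on C (g u)"
  shows "convex_on C (\<lambda>p. SUP u\<in>S. g u p)"
proof (rule convex_onI)
  fix s :: real and p q assume s: "0 < s" "s < 1" and pq: "p \<in> C" "q \<in> C"
  show "(SUP u\<in>S. g u ((1 - s) *\<^sub>R p + s *\<^sub>R q))
        \<le> (1 - s) * (SUP u\<in>S. g u p) + s * (SUP u\<in>S. g u q)"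
  proof (rule cSUP_least[OF ne])
    fix u assume u: "u \<in> S"
    have "g u ((1 - s) *\<^sub>R p + s *\<^sub>R q) \<le> (1 - s) * g u p + s * g u q"
      using convex_onD[OF cvx[OF u]] s pq by simp
    also have "\<dots> \<le> (1 - s) * (SUP u\<in>S. g u p) + s * (SUP u\<in>S. g u q)"
      using s u cSUP_upper[OF u bdd[OF pq(1)]] cSUP_upper[OF u bdd[OF pq(2)]]
      by (intro add_mono mult_left_mono) auto
    finally show "g u ((1 - s) *\<^sub>R p + s *\<^sub>R q) \<le> \<dots>" .
  qed
next
  show "convex C" using ne cvx by (metis convex_on_imp_convex ex_in_conv)
qed

lemma convex_on_affine_inner: "convex_on UNIV (\<lambda>p. p \<bullet> v - r)"
  by (rule convex_onI) (simp_all add: inner_add_left algebra_simps)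

text \<open>The right-hand side only quantifies over countable sets; this is what makes
  the supremum over a measurable set-valued map measurable.\<close>

lemma less_cSUP_iff_dense:
  fixes g :: "'b::metric_space \<Rightarrow> real"
  assumes g: "continuous_on UNIV g" and ne: "S \<noteq> {}" and bdd: "bdd_above (g ` S)"
    and dense: "\<And>X. open X \<Longrightarrow> X \<noteq> {} \<Longrightarrow> \<exists>d\<in>D. d \<in> X"
  shows "a < (SUP u\<in>S. g u) \<longleftrightarrow>
    (\<exists>d\<in>D. \<exists>m j::nat. S \<inter> ball d (1 / Suc m) \<noteq> {} \<and>
       (\<forall>e\<in>D \<inter> ball d (1 / Suc m). a + 1 / Suc j \<le> g e))"
    (is "_ \<longleftrightarrow> (\<exists>d\<in>D. \<exists>m j. ?meets d m \<and> ?above d m j)")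
proof
  assume "a < (SUP u\<in>S. g u)"
  then obtain u where u: "u \<in> S" "a < g u"
    using less_cSUP_iff[OF ne bdd] by blast
  then obtain j :: nat where "1 / Suc j < g u - a"
    using nat_approx_posE[of "g u - a"] by auto
  then have j: "u \<in> g -` {a + 1 / Suc j<..}"
    by simp
  have "open (g -` {a + 1 / Suc j<..})"
    by (rule open_vimage[OF open_greaterThan g])
  then obtain \<epsilon> where \<epsilon>: "\<epsilon> > 0" "ball u \<epsilon> \<subseteq> g -` {a + 1 / Suc j<..}"
    using j unfolding open_contains_ball by blast
  obtain m :: nat where m: "1 / Suc m < \<epsilon> / 2"
    using nat_approx_posE[of "\<epsilon> / 2"] \<epsilon>(1) by auto
  obtain d where d: "d \<in> D" "d \<in> ball u (1 / Suc m)"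
    using dense[of "ball u (1 / Suc m)"] by auto
  have "ball d (1 / Suc m) \<subseteq> ball u \<epsilon>"
  proof
    fix e assume "e \<in> ball d (1 / Suc m)"
    then show "e \<in> ball u \<epsilon>"
      using d(2) m dist_triangle[of u e d] by (simp add: dist_commute)
  qed
  then have "?above d m j"
    using \<epsilon>(2) by force
  moreover have "?meets d m"
    using u(1) d(2) by (auto simp: dist_commute)
  ultimately show "\<exists>d\<in>D. \<exists>m j. ?meets d m \<and> ?above d m j"
    using d(1) by blast
next
  assume "\<exists>d\<in>D. \<exists>m j. ?meets d m \<and> ?above d m j"
  then obtain d m j u where u: "u \<in> S" "u \<in> ball d (1 / Suc m)" and above: "?above d m j"
    by blast
  have "a < a + 1 / Suc j"
    by simp
  also have "a + 1 / Suc j \<le> g u"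
  proof (rule ccontr)
    let ?V = "ball d (1 / Suc m) \<inter> g -` {..<a + 1 / Suc j}"
    assume "\<not> ?thesis"
    then have "u \<in> ?V" using u by auto
    moreover have "open ?V"
      by (intro open_Int open_ball open_vimage[OF open_lessThan g])
    ultimately obtain e where "e \<in> D" "e \<in> ?V"
      using dense[of ?V] by blast
    then show False
      using above by force
  qed
  also have "g u \<le> (SUP u\<in>S. g u)"
    using u(1) bdd by (rule cSUP_upper)
  finally show "a < (SUP u\<in>S. g u)" .
qed

lemma borel_measurable_cSUP_setvalued:
  fixes U :: "real \<Rightarrow> 'b::euclidean_space set" and g :: "real \<Rightarrow> 'b \<Rightarrow> real"
  assumes U: "measurable_setvalued U" and ne: "\<And>t. t \<ge> 0 \<Longrightarrow> U t \<noteq> {}"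
    and meas: "\<And>u. (\<lambda>t. g t u) \<in> borel_measurable (lebesgue_on {0..})"
    and cont: "\<And>t. t \<ge> 0 \<Longrightarrow> continuous_on UNIV (g t)"
    and bdd: "\<And>t. t \<ge> 0 \<Longrightarrow> bdd_above (g t ` U t)"
  shows "(\<lambda>t. SUP u\<in>U t. g t u) \<in> borel_measurable (lebesgue_on {0..})"
proof -
  let ?M = "lebesgue_on {0::real..}"
  obtain D :: "'b set" where D: "countable D" and dense: "\<And>X. open X \<Longrightarrow> X \<noteq> {} \<Longrightarrow> \<exists>d\<in>D. d \<in> X"
    by (rule countable_dense_setE) blast
  have meets: "{t \<in> space ?M. U t \<inter> ball d r \<noteq> {}} \<in> sets ?M" for d r
    using U unfolding measurable_setvalued_def by (auto simp: sets_restrict_space_iff)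
  have above: "{t \<in> space ?M. c \<le> g t e} \<in> sets ?M" for c e
    using meas[of e] by measurable
  show ?thesis
  proof (rule borel_measurable_iff_greater[THEN iffD2], intro allI)
    fix a :: real
    have "{t \<in> space ?M. a < (SUP u\<in>U t. g t u)} =
      {t \<in> space ?M. \<exists>d\<in>D. \<exists>m j::nat. U t \<inter> ball d (1 / Suc m) \<noteq> {} \<and>
         (\<forall>e\<in>D \<inter> ball d (1 / Suc m). a + 1 / Suc j \<le> g t e)}"
      by (simp add: less_cSUP_iff_dense[OF cont ne bdd dense] cong: conj_cong)
    also have "\<dots> \<in> sets ?M"
      using D meets above
      by (intro sets.sets_Collect_countable_Ex' sets.sets_Collect_countable_Ex
          sets.sets_Collect_conj sets.sets_Collect_countable_All') auto
    finally show "{t \<in> space ?M. a < (SUP u\<in>U t. g t u)} \<in> sets ?M" .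
  qed
qed

section \<open>The Hamiltonian at a fixed time and state\<close>

text \<open>The function \<open>\<lambda>\<close> of \<open>(H3)\<close>--\<open>(H7)\<close>.\<close>

definition sup_norm_dynamics_cost ::
    "(real \<Rightarrow> 'b set) \<Rightarrow> (real \<Rightarrow> 'a::real_normed_vector \<Rightarrow> 'b \<Rightarrow> 'a)
      \<Rightarrow> (real \<Rightarrow> 'a \<Rightarrow> 'b \<Rightarrow> real) \<Rightarrow> real \<Rightarrow> 'a \<Rightarrow> real" where
  "sup_norm_dynamics_cost U f l t x = (SUP u\<in>U t. norm (f t x u) + \<bar>l t x u\<bar>)"

lemma sup_norm_dynamics_cost_ge:
  assumes bound: "\<And>u. u \<in> U t \<Longrightarrow> norm (f t x u) + \<bar>l t x u\<bar> \<le> B" and "u \<in> U t"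
  shows "norm (f t x u) + \<bar>l t x u\<bar> \<le> sup_norm_dynamics_cost U f l t x"
  unfolding sup_norm_dynamics_cost_def using bound by (intro cSUP_upper[OF assms(2)] bdd_aboveI2)

lemma sup_norm_dynamics_cost_le:
  assumes "U t \<noteq> {}" and "\<And>u. u \<in> U t \<Longrightarrow> norm (f t x u) + \<bar>l t x u\<bar> \<le> C"
  shows "sup_norm_dynamics_cost U f l t x \<le> C"
  unfolding sup_norm_dynamics_cost_def by (rule cSUP_least[OF assms])

lemma sup_norm_dynamics_cost_nonneg:
  assumes "U t \<noteq> {}" and bound: "\<And>u. u \<in> U t \<Longrightarrow> norm (f t x u) + \<bar>l t x u\<bar> \<le> B"
  shows "0 \<le> sup_norm_dynamics_cost U f l t x"
proof -
  obtain u where "u \<in> U t" using assms(1) by blast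
  then show ?thesis
    using sup_norm_dynamics_cost_ge[of U t f x l B, OF bound] by (smt (verit) norm_ge_zero)
qed

lemma sup_norm_dynamics_cost_lipschitz:
  assumes "U t \<noteq> {}"
    and bound_x: "\<And>u. u \<in> U t \<Longrightarrow> norm (f t x u) + \<bar>l t x u\<bar> \<le> Bx"
    and bound_y: "\<And>u. u \<in> U t \<Longrightarrow> norm (f t y u) + \<bar>l t y u\<bar> \<le> By"
    and lip: "\<And>u. u \<in> U t \<Longrightarrow> norm (f t x u - f t y u) + \<bar>l t x u - l t y u\<bar> \<le> K"
  shows "\<bar>sup_norm_dynamics_cost U f l t x - sup_norm_dynamics_cost U f l t y\<bar> \<le> K"
  unfolding sup_norm_dynamics_cost_def
proof (rule abs_cSUP_diff_le[OF assms(1)])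
  fix u assume u: "u \<in> U t"
  show "\<bar>norm (f t x u) + \<bar>l t x u\<bar> - (norm (f t y u) + \<bar>l t y u\<bar>)\<bar> \<le> K"
    using norm_triangle_ineq3[of "f t x u" "f t y u"] abs_triangle_ineq3[of "l t x u" "l t y u"] lip[OF u]
    by linarith
qed (rule bdd_aboveI2, erule bound_x, rule bdd_aboveI2, erule bound_y)

lemma bdd_above_hamiltonian_terms:
  assumes bound: "\<And>u. u \<in> U t \<Longrightarrow> norm (f t x u) + \<bar>l t x u\<bar> \<le> B"
  shows "bdd_above ((\<lambda>u. p \<bullet> f t x u - l t x u) ` U t)"
proof (rule bdd_aboveI2)
  fix u assume u: "u \<in> U t"
  have "norm p * norm (f t x u) \<le> norm p * B"
    using bound[OF u] by (intro mult_left_mono) auto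
  then show "p \<bullet> f t x u - l t x u \<le> norm p * B + B"
    using norm_cauchy_schwarz[of p "f t x u"] bound[OF u] abs_ge_minus_self[of "l t x u"] norm_ge_zero[of "f t x u"]
    by linarith
qed

lemma hamiltonian_ge:
  assumes bound: "\<And>u. u \<in> U t \<Longrightarrow> norm (f t x u) + \<bar>l t x u\<bar> \<le> B" and "u \<in> U t"
  shows "p \<bullet> f t x u - l t x u \<le> hamiltonian U f l t x p"
  unfolding hamiltonian_def
  by (rule cSUP_upper[OF assms(2)]) (use bound in \<open>rule bdd_above_hamiltonian_terms\<close>)

lemma hamiltonian_le:
  assumes "U t \<noteq> {}" and "\<And>u. u \<in> U t \<Longrightarrow> p \<bullet> f t x u - l t x u \<le> C"
  shows "hamiltonian U f l t x p \<le> C"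
  unfolding hamiltonian_def by (rule cSUP_least[OF assms])

lemma convex_on_hamiltonian:
  assumes "U t \<noteq> {}" and bound: "\<And>u. u \<in> U t \<Longrightarrow> norm (f t x u) + \<bar>l t x u\<bar> \<le> B"
  shows "convex_on UNIV (hamiltonian U f l t x)"
  unfolding hamiltonian_def[abs_def]
proof (rule convex_on_cSUP[OF assms(1)])
  show "bdd_above ((\<lambda>u. p \<bullet> f t x u - l t x u) ` U t)" for p
    using bound by (rule bdd_above_hamiltonian_terms)
qed (rule convex_on_affine_inner)

lemma hamiltonian_lipschitz_momentum:
  assumes "U t \<noteq> {}" and bound: "\<And>u. u \<in> U t \<Longrightarrow> norm (f t x u) + \<bar>l t x u\<bar> \<le> B"
  shows "\<bar>hamiltonian U f l t x p - hamiltonian U f l t x q\<bar>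
           \<le> sup_norm_dynamics_cost U f l t x * norm (p - q)"
  unfolding hamiltonian_def
proof (rule abs_cSUP_diff_le[OF assms(1)])
  fix u assume u: "u \<in> U t"
  have "\<bar>p \<bullet> f t x u - l t x u - (q \<bullet> f t x u - l t x u)\<bar> = \<bar>(p - q) \<bullet> f t x u\<bar>"
    by (simp add: inner_diff_left)
  also have "\<dots> \<le> norm (p - q) * norm (f t x u)"
    by (rule Cauchy_Schwarz_ineq2)
  also have "\<dots> \<le> norm (p - q) * sup_norm_dynamics_cost U f l t x"
    using sup_norm_dynamics_cost_ge[of U t f x l B, OF bound u] by (intro mult_left_mono) auto
  finally show "\<bar>p \<bullet> f t x u - l t x u - (q \<bullet> f t x u - l t x u)\<bar>
      \<le> sup_norm_dynamics_cost U f l t x * norm (p - q)"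
    by (simp add: mult.commute)
qed (rule bdd_above_hamiltonian_terms, fact bound)+

lemma hamiltonian_lipschitz_state:
  assumes "U t \<noteq> {}"
    and bound_x: "\<And>u. u \<in> U t \<Longrightarrow> norm (f t x u) + \<bar>l t x u\<bar> \<le> Bx"
    and bound_y: "\<And>u. u \<in> U t \<Longrightarrow> norm (f t y u) + \<bar>l t y u\<bar> \<le> By"
    and lip: "\<And>u. u \<in> U t \<Longrightarrow> norm (f t x u - f t y u) + \<bar>l t x u - l t y u\<bar> \<le> K"
  shows "\<bar>hamiltonian U f l t x p - hamiltonian U f l t y p\<bar> \<le> (1 + norm p) * K"
  unfolding hamiltonian_def
proof (rule abs_cSUP_diff_le[OF assms(1)])
  fix u assume u: "u \<in> U t"
  have "\<bar>p \<bullet> (f t x u - f t y u)\<bar> \<le> norm p * norm (f t x u - f t y u)"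
    by (rule Cauchy_Schwarz_ineq2)
  also have "\<dots> \<le> norm p * K"
    using lip[OF u] by (intro mult_left_mono) auto
  moreover have "\<bar>l t x u - l t y u\<bar> \<le> K"
    using lip[OF u] norm_ge_zero[of "f t x u - f t y u"] by linarith
  moreover have "p \<bullet> f t x u - l t x u - (p \<bullet> f t y u - l t y u)
      = p \<bullet> (f t x u - f t y u) - (l t x u - l t y u)"
    by (simp add: inner_diff_right)
  ultimately show "\<bar>p \<bullet> f t x u - l t x u - (p \<bullet> f t y u - l t y u)\<bar> \<le> (1 + norm p) * K"
    by (simp add: distrib_right)
qed (rule bdd_above_hamiltonian_terms, fact bound_x, rule bdd_above_hamiltonian_terms, fact bound_y)

section \<open>The conjugate of the Hamiltonian\<close>

lemma Hstar_hamiltonian_le: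
  assumes bound: "\<And>u. u \<in> U t \<Longrightarrow> norm (f t x u) + \<bar>l t x u\<bar> \<le> B" and "u \<in> U t"
  shows "Hstar (hamiltonian U f l) t x (f t x u) \<le> ereal (l t x u)"
  unfolding Hstar_def
proof (rule SUP_least)
  fix p
  have "p \<bullet> f t x u - l t x u \<le> hamiltonian U f l t x p"
    using bound assms(2) by (rule hamiltonian_ge)
  then show "ereal (f t x u \<bullet> p - hamiltonian U f l t x p) \<le> ereal (l t x u)"
    by (simp add: inner_commute)
qed

lemma image_subset_epi_Hstar_hamiltonian:
  assumes bound: "\<And>u. u \<in> U t \<Longrightarrow> norm (f t x u) + \<bar>l t x u\<bar> \<le> B"
  shows "(\<lambda>u. (f t x u, l t x u)) ` U t \<subseteq> epi_Hstar (hamiltonian U f l) t x"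
  using Hstar_hamiltonian_le[where U=U and f=f and l=l and t=t and x=x, OF bound]
  by (auto simp: epi_Hstar_def)

lemma Hstar_eq_ereal_real_of_dom:
  assumes "v \<in> dom_Hstar H t x"
  shows "Hstar H t x v = ereal (real_of_ereal (Hstar H t x v))"
proof -
  have "ereal (v \<bullet> 0 - H t x 0) \<le> Hstar H t x v"
    unfolding Hstar_def by (rule SUP_upper) simp
  then show ?thesis
    using assms unfolding dom_Hstar_def by (cases "Hstar H t x v") auto
qed

lemma closed_upward_closure:
  fixes f :: "'b \<Rightarrow> 'a::real_normed_vector" and l :: "'b \<Rightarrow> real"
  assumes "compact ((\<lambda>u. (f u, l u)) ` S)"
  shows "closed {(f u, l u + r) | u r. u \<in> S \<and> 0 \<le> r}"
proof -
  have "{(f u, l u + r) | u r. u \<in> S \<and> 0 \<le> r}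
      = (\<Union>z\<in>(\<lambda>u. (f u, l u)) ` S. \<Union>y\<in>{0} \<times> {0..}. {z + y})"
    by (auto simp: image_iff) force+
  moreover have "closed (({0}::'a set) \<times> {0::real..})"
    by (intro closed_Times) auto
  ultimately show ?thesis
    using compact_closed_sums[OF assms, of "{0} \<times> {0..}"] by simp
qed

lemma Hstar_hamiltonian_gt_of_separation:
  assumes ne: "U t \<noteq> {}" and bound: "\<And>u. u \<in> U t \<Longrightarrow> norm (f t x u) + \<bar>l t x u\<bar> \<le> B"
    and sep: "\<And>u s. u \<in> U t \<Longrightarrow> 0 \<le> s \<Longrightarrow> b < p \<bullet> f t x u + \<alpha> * (l t x u + s)"
    and below: "p \<bullet> v + \<alpha> * r < b"
  shows "ereal r < Hstar (hamiltonian U f l) t x v"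
proof -
  let ?H = "hamiltonian U f l t x"
  obtain u0 where u0: "u0 \<in> U t"
    using ne by blast
  have "0 \<le> \<alpha>"
  proof (rule ccontr)
    assume neg: "\<not> 0 \<le> \<alpha>"
    define s where "s = (p \<bullet> f t x u0 + \<alpha> * l t x u0 - b) / - \<alpha>"
    have "0 \<le> s"
      using sep[OF u0, of 0] neg unfolding s_def by (intro divide_nonneg_pos) auto
    moreover have "p \<bullet> f t x u0 + \<alpha> * (l t x u0 + s) = b"
      using neg by (simp add: s_def field_simps)
    ultimately show False
      using sep[OF u0] by fastforce
  qed
  \<comment> \<open>A non-vertical separating hyperplane has slope \<open>-p/\<alpha>\<close>; along a vertical one,
     \<open>v \<bullet> P - H P\<close> grows without bound for \<open>P = -\<mu> p\<close> as \<open>\<mu> \<rightarrow> \<infinity>\<close>.\<close>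
  have "\<exists>P. r < v \<bullet> P - ?H P"
  proof (cases "\<alpha> = 0")
    case False
    with \<open>0 \<le> \<alpha>\<close> have "0 < \<alpha>" by simp
    have "?H (- (1 / \<alpha>) *\<^sub>R p) \<le> - b / \<alpha>"
    proof (rule hamiltonian_le)
      fix u assume "u \<in> U t"
      then have "b / \<alpha> < (p \<bullet> f t x u + \<alpha> * l t x u) / \<alpha>"
        using sep[of u 0] \<open>0 < \<alpha>\<close> by (simp add: divide_strict_right_mono)
      moreover have "(- (1 / \<alpha>) *\<^sub>R p) \<bullet> f t x u - l t x u = - ((p \<bullet> f t x u + \<alpha> * l t x u) / \<alpha>)"
        using \<open>0 < \<alpha>\<close> by (simp add: field_simps)
      ultimately show "(- (1 / \<alpha>) *\<^sub>R p) \<bullet> f t x u - l t x u \<le> - b / \<alpha>"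
        by simp
    qed (fact ne)
    moreover have "r < v \<bullet> (- (1 / \<alpha>) *\<^sub>R p) + b / \<alpha>"
      using below \<open>0 < \<alpha>\<close> by (simp add: field_simps inner_commute)
    ultimately show ?thesis
      by (intro exI[of _ "- (1 / \<alpha>) *\<^sub>R p"]) linarith
  next
    case True
    have gap: "0 < b - p \<bullet> v"
      using below True by simp
    define \<mu> where "\<mu> = (\<bar>r\<bar> + \<bar>?H 0\<bar> + 1) / (b - p \<bullet> v)"
    have "0 \<le> \<mu>"
      using gap by (simp add: \<mu>_def)
    have "?H (- \<mu> *\<^sub>R p) \<le> - \<mu> * b + ?H 0"
    proof (rule hamiltonian_le)
      fix u assume u: "u \<in> U t"
      have "\<mu> * b \<le> \<mu> * (p \<bullet> f t x u)"
        using sep[OF u, of 0] True \<open>0 \<le> \<mu>\<close> by (intro mult_left_mono) auto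
      moreover have "0 \<bullet> f t x u - l t x u \<le> ?H 0"
        using bound u by (rule hamiltonian_ge)
      ultimately show "(- \<mu> *\<^sub>R p) \<bullet> f t x u - l t x u \<le> - \<mu> * b + ?H 0"
        by simp
    qed (fact ne)
    moreover have "\<mu> * b - \<mu> * (p \<bullet> v) = \<bar>r\<bar> + \<bar>?H 0\<bar> + 1"
      using gap unfolding right_diff_distrib[symmetric] by (simp add: \<mu>_def)
    moreover have "v \<bullet> (- \<mu> *\<^sub>R p) = - (\<mu> * (p \<bullet> v))"
      by (simp add: inner_commute)
    ultimately show ?thesis
      using abs_ge_self[of r] abs_ge_minus_self[of "?H 0"]
      by (intro exI[of _ "- \<mu> *\<^sub>R p"]) linarith
  qed
  then obtain P where "ereal r < ereal (v \<bullet> P - ?H P)"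
    by auto
  also have "ereal (v \<bullet> P - ?H P) \<le> Hstar (hamiltonian U f l) t x v"
    unfolding Hstar_def by (rule SUP_upper) simp
  finally show ?thesis .
qed

lemma gph_Hstar_hamiltonian_subset:
  assumes ne: "U t \<noteq> {}" and bound: "\<And>u. u \<in> U t \<Longrightarrow> norm (f t x u) + \<bar>l t x u\<bar> \<le> B"
    and closed: "closed ((\<lambda>u. (f t x u, l t x u)) ` U t)"
    and convex: "convex {(f t x u, l t x u + r) | u r. u \<in> U t \<and> 0 \<le> r}"
  shows "gph_Hstar (hamiltonian U f l) t x \<subseteq> (\<lambda>u. (f t x u, l t x u)) ` U t"
proof (clarsimp simp: gph_Hstar_def)
  fix v r assume Hstar: "Hstar (hamiltonian U f l) t x v = ereal r"
  let ?E = "{(f t x u, l t x u + r) | u r. u \<in> U t \<and> 0 \<le> r}"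
  have "bounded ((\<lambda>u. (f t x u, l t x u)) ` U t)"
    unfolding bounded_iff using bound by (force intro: order_trans[OF norm_Pair_le])
  then have "closed ?E"
    using closed by (intro closed_upward_closure) (simp add: compact_eq_bounded_closed)
  have "(v, r) \<in> ?E"
  proof (rule ccontr)
    assume "(v, r) \<notin> ?E"
    then obtain a b where below: "a \<bullet> (v, r) < b" and above: "\<forall>z\<in>?E. b < a \<bullet> z"
      using separating_hyperplane_closed_point[OF convex \<open>closed ?E\<close>] by blast
    obtain p \<alpha> where a: "a = (p, \<alpha>)"
      by fastforce
    have "b < p \<bullet> f t x u + \<alpha> * (l t x u + s)" if "u \<in> U t" "0 \<le> s" for u s
    proof -
      have "(f t x u, l t x u + s) \<in> ?E"
        using that by blast
      then show ?thesis
        using above by (auto simp: a)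
    qed
    moreover have "p \<bullet> v + \<alpha> * r < b"
      using below a by simp
    ultimately have "ereal r < Hstar (hamiltonian U f l) t x v"
      using Hstar_hamiltonian_gt_of_separation[where U=U and f=f and l=l and t=t and x=x,
          OF ne bound] by blast
    then show False
      using Hstar by simp
  qed
  then obtain u s where u: "u \<in> U t" "0 \<le> s" "v = f t x u" "r = l t x u + s"
    by blast
  moreover have "r \<le> l t x u"
    using Hstar_hamiltonian_le[where U=U and f=f and l=l and t=t and x=x, OF bound u(1)] Hstar u(3)
    by simp
  ultimately show "(v, r) \<in> (\<lambda>u. (f t x u, l t x u)) ` U t"
    by (intro image_eqI[of _ _ u]) auto
qed

lemma dom_Hstar_hamiltonian:
  assumes ne: "U t \<noteq> {}" and bound: "\<And>u. u \<in> U t \<Longrightarrow> norm (f t x u) + \<bar>l t x u\<bar> \<le> B"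
    and closed: "closed ((\<lambda>u. (f t x u, l t x u)) ` U t)"
    and convex: "convex {(f t x u, l t x u + r) | u r. u \<in> U t \<and> 0 \<le> r}"
  shows "dom_Hstar (hamiltonian U f l) t x = f t x ` U t"
proof
  show "dom_Hstar (hamiltonian U f l) t x \<subseteq> f t x ` U t"
  proof
    fix v assume "v \<in> dom_Hstar (hamiltonian U f l) t x"
    then have "(v, real_of_ereal (Hstar (hamiltonian U f l) t x v)) \<in> gph_Hstar (hamiltonian U f l) t x"
      unfolding gph_Hstar_def using Hstar_eq_ereal_real_of_dom by blast
    then show "v \<in> f t x ` U t"
      using gph_Hstar_hamiltonian_subset[where U=U and f=f and l=l and t=t and x=x,
          OF ne bound closed convex] by auto
  qed
  show "f t x ` U t \<subseteq> dom_Hstar (hamiltonian U f l) t x"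
  proof
    fix v assume "v \<in> f t x ` U t"
    then obtain u where "u \<in> U t" "v = f t x u"
      by blast
    then have "Hstar (hamiltonian U f l) t x v \<le> ereal (l t x u)"
      using Hstar_hamiltonian_le[where U=U and f=f and l=l and t=t and x=x, OF bound] by blast
    then show "v \<in> dom_Hstar (hamiltonian U f l) t x"
      unfolding dom_Hstar_def using le_less_trans by fastforce
  qed
qed

lemma abs_Hstar_hamiltonian_le:
  assumes ne: "U t \<noteq> {}" and bound: "\<And>u. u \<in> U t \<Longrightarrow> norm (f t x u) + \<bar>l t x u\<bar> \<le> B"
    and closed: "closed ((\<lambda>u. (f t x u, l t x u)) ` U t)"
    and convex: "convex {(f t x u, l t x u + r) | u r. u \<in> U t \<and> 0 \<le> r}"
    and v: "v \<in> dom_Hstar (hamiltonian U f l) t x"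
  shows "\<bar>Hstar (hamiltonian U f l) t x v\<bar> \<le> ereal (sup_norm_dynamics_cost U f l t x)"
proof -
  let ?r = "real_of_ereal (Hstar (hamiltonian U f l) t x v)"
  have "(v, ?r) \<in> (\<lambda>u. (f t x u, l t x u)) ` U t"
    using gph_Hstar_hamiltonian_subset[where U=U and f=f and l=l and t=t and x=x,
        OF ne bound closed convex] Hstar_eq_ereal_real_of_dom[OF v]
    by (auto simp: gph_Hstar_def)
  then obtain u where "u \<in> U t" "v = f t x u" "?r = l t x u"
    by auto
  then have "\<bar>?r\<bar> \<le> sup_norm_dynamics_cost U f l t x"
    using sup_norm_dynamics_cost_ge[where U=U and f=f and l=l and t=t and x=x, OF bound]
    by (smt (verit) norm_ge_zero)
  then show ?thesis
    by (subst Hstar_eq_ereal_real_of_dom[OF v]) simp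
qed

section \<open>Conditions (h)'' and (h)''_H\<close>

lemma continuous_on_slice:
  assumes "continuous_on UNIV (\<lambda>(x, u). h x u)"
  shows "continuous_on UNIV (h x)"
proof -
  have "continuous_on UNIV ((\<lambda>(x, u). h x u) \<circ> Pair x)"
    by (rule continuous_on_compose) (auto intro: continuous_intros continuous_on_subset[OF assms])
  then show ?thesis
    by (simp add: o_def)
qed

lemma cond_hE:
  assumes "cond_h A U f l"
  obtains \<phi> c q k where
    "measurable_setvalued U" and "\<And>t. t \<ge> 0 \<Longrightarrow> U t \<noteq> {}"
    and "\<And>x u. (\<lambda>t. f t x u) \<in> borel_measurable (lebesgue_on {0..})"
    and "\<And>x u. (\<lambda>t. l t x u) \<in> borel_measurable (lebesgue_on {0..})"
    and "\<And>t x. t \<ge> 0 \<Longrightarrow> continuous_on UNIV (f t x)"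
    and "\<And>t x. t \<ge> 0 \<Longrightarrow> continuous_on UNIV (l t x)"
    and "L1_pos \<phi>" and "\<And>t x u. t \<ge> 0 \<Longrightarrow> \<phi> t \<le> l t x u"
    and "L1loc_nonneg c"
    and "\<And>t x u. t \<ge> 0 \<Longrightarrow> u \<in> U t \<Longrightarrow> norm (f t x u) + \<bar>l t x u\<bar> \<le> c t * (1 + norm x)"
    and "\<And>t x. t \<ge> 0 \<Longrightarrow> closed ((\<lambda>u. (f t x u, l t x u)) ` U t)"
    and "\<And>t x. t \<ge> 0 \<Longrightarrow> convex {(f t x u, l t x u + r) | u r. u \<in> U t \<and> 0 \<le> r}"
    and "Lscr_loc q"
    and "\<And>t x u. t \<ge> 0 \<Longrightarrow> x \<in> frontier A \<Longrightarrow> u \<in> U t \<Longrightarrow> norm (f t x u) + \<bar>l t x u\<bar> \<le> q t"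
    and "Lscr_loc k"
    and "\<And>t x y u. t \<ge> 0 \<Longrightarrow> u \<in> U t \<Longrightarrow>
           norm (f t x u - f t y u) + \<bar>l t x u - l t y u\<bar> \<le> k t * norm (x - y)"
proof -
  obtain \<phi> c q k where
    U: "measurable_setvalued U" and ne: "\<forall>t\<ge>0. U t \<noteq> {} \<and> closed (U t)"
    and meas: "\<forall>x u. (\<lambda>t. f t x u) \<in> borel_measurable (lebesgue_on {0..}) \<and>
                      (\<lambda>t. l t x u) \<in> borel_measurable (lebesgue_on {0..})"
    and cont: "\<forall>t\<ge>0. continuous_on UNIV (\<lambda>(x, u). f t x u) \<and> continuous_on UNIV (\<lambda>(x, u). l t x u)"
    and \<phi>: "L1_pos \<phi>" "\<forall>t\<ge>0. \<forall>x u. \<phi> t \<le> l t x u"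
    and c: "L1loc_nonneg c" "\<forall>t\<ge>0. \<forall>x. \<forall>u\<in>U t. norm (f t x u) + \<bar>l t x u\<bar> \<le> c t * (1 + norm x)"
    and h3: "\<forall>t\<ge>0. hausdorff_continuous (\<lambda>x. (\<lambda>u. (f t x u, l t x u)) ` U t) \<and>
                        (\<forall>x. closed ((\<lambda>u. (f t x u, l t x u)) ` U t))"
    and h4: "\<forall>t\<ge>0. \<forall>x. convex {(f t x u, l t x u + r) | u r. u \<in> U t \<and> r \<ge> 0}"
    and q: "Lscr_loc q" "\<forall>t\<ge>0. \<forall>x\<in>frontier A. \<forall>u\<in>U t. norm (f t x u) + \<bar>l t x u\<bar> \<le> q t"
    and k: "Lscr_loc k" "\<forall>t\<ge>0. \<forall>x y. \<forall>u\<in>U t.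
              norm (f t x u - f t y u) + \<bar>l t x u - l t y u\<bar> \<le> k t * norm (x - y)"
    using assms unfolding cond_h_def by (elim conjE exE) (rule that; assumption)
  have "continuous_on UNIV (f t x)" "continuous_on UNIV (l t x)" if "t \<ge> 0" for t x
    using cont that continuous_on_slice[of "f t"] continuous_on_slice[of "l t"] by blast+
  then show ?thesis
    by (intro that[of \<phi> c q k]) (simp_all add: U ne meas \<phi> c h3 h4 q k)
qed

lemma borel_measurable_hamiltonian:
  assumes U: "measurable_setvalued U" and ne: "\<And>t. t \<ge> 0 \<Longrightarrow> U t \<noteq> {}"
    and meas_f: "\<And>u. (\<lambda>t. f t x u) \<in> borel_measurable (lebesgue_on {0..})"
    and meas_l: "\<And>u. (\<lambda>t. l t x u) \<in> borel_measurable (lebesgue_on {0..})"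
    and cont_f: "\<And>t. t \<ge> 0 \<Longrightarrow> continuous_on UNIV (f t x)"
    and cont_l: "\<And>t. t \<ge> 0 \<Longrightarrow> continuous_on UNIV (l t x)"
    and bound: "\<And>t u. t \<ge> 0 \<Longrightarrow> u \<in> U t \<Longrightarrow> norm (f t x u) + \<bar>l t x u\<bar> \<le> B t"
  shows "(\<lambda>t. hamiltonian U f l t x p) \<in> borel_measurable (lebesgue_on {0..})"
  unfolding hamiltonian_def
proof (rule borel_measurable_cSUP_setvalued[OF U ne])
  show "(\<lambda>t. p \<bullet> f t x u - l t x u) \<in> borel_measurable (lebesgue_on {0..})" for u
    using meas_f meas_l by measurable
  show "continuous_on UNIV (\<lambda>u. p \<bullet> f t x u - l t x u)" if "t \<ge> 0" for t
    using cont_f[OF that] cont_l[OF that] by (intro continuous_intros)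
  show "bdd_above ((\<lambda>u. p \<bullet> f t x u - l t x u) ` U t)" if "t \<ge> 0" for t
    using bound[OF that] by (rule bdd_above_hamiltonian_terms)
qed

lemma borel_measurable_sup_norm_dynamics_cost:
  assumes U: "measurable_setvalued U" and ne: "\<And>t. t \<ge> 0 \<Longrightarrow> U t \<noteq> {}"
    and meas_f: "\<And>u. (\<lambda>t. f t x u) \<in> borel_measurable (lebesgue_on {0..})"
    and meas_l: "\<And>u. (\<lambda>t. l t x u) \<in> borel_measurable (lebesgue_on {0..})"
    and cont_f: "\<And>t. t \<ge> 0 \<Longrightarrow> continuous_on UNIV (f t x)"
    and cont_l: "\<And>t. t \<ge> 0 \<Longrightarrow> continuous_on UNIV (l t x)"
    and bound: "\<And>t u. t \<ge> 0 \<Longrightarrow> u \<in> U t \<Longrightarrow> norm (f t x u) + \<bar>l t x u\<bar> \<le> B t"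
  shows "(\<lambda>t. sup_norm_dynamics_cost U f l t x) \<in> borel_measurable (lebesgue_on {0..})"
  unfolding sup_norm_dynamics_cost_def
proof (rule borel_measurable_cSUP_setvalued[OF U ne])
  show "(\<lambda>t. norm (f t x u) + \<bar>l t x u\<bar>) \<in> borel_measurable (lebesgue_on {0..})" for u
    using meas_f meas_l by measurable
  show "continuous_on UNIV (\<lambda>u. norm (f t x u) + \<bar>l t x u\<bar>)" if "t \<ge> 0" for t
    using cont_f[OF that] cont_l[OF that] by (intro continuous_intros)
  show "bdd_above ((\<lambda>u. norm (f t x u) + \<bar>l t x u\<bar>) ` U t)" if "t \<ge> 0" for t
    using bound[OF that] by (rule bdd_aboveI2)
qed

lemma OPC_cong:
  assumes "\<And>t y. t \<ge> 0 \<Longrightarrow> F t y = G t y"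
  shows "OPC A F \<longleftrightarrow> OPC A G"
  unfolding OPC_def using assms by simp

lemma cond_hHI:
  fixes H :: "real \<Rightarrow> 'a::euclidean_space \<Rightarrow> 'a \<Rightarrow> real" and lam :: "real \<Rightarrow> 'a \<Rightarrow> real"
  assumes "\<And>x p. (\<lambda>t. H t x p) \<in> borel_measurable (lebesgue_on {0..})"
    and "\<And>t p. t \<ge> 0 \<Longrightarrow> continuous_on UNIV (\<lambda>x. H t x p)"
    and "\<And>t x. t \<ge> 0 \<Longrightarrow> convex_on UNIV (H t x)"
    and "L1_pos \<phi>" and "\<And>t x. t \<ge> 0 \<Longrightarrow> H t x 0 \<le> - \<phi> t"
    and "\<And>t x. t \<ge> 0 \<Longrightarrow> 0 \<le> lam t x"
    and "\<And>x. (\<lambda>t. lam t x) \<in> borel_measurable (lebesgue_on {0..})"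
    and "\<And>t. t \<ge> 0 \<Longrightarrow> continuous_on UNIV (lam t)"
    and "L1loc_nonneg c" and "Lscr_loc k" and "Lscr_loc q"
    and "\<And>t x. t \<ge> 0 \<Longrightarrow> lam t x \<le> c t * (1 + norm x)"
    and "\<And>t x. t \<ge> 0 \<Longrightarrow> x \<in> frontier A \<Longrightarrow> lam t x \<le> q t"
    and "\<And>t x y. t \<ge> 0 \<Longrightarrow> \<bar>lam t x - lam t y\<bar> \<le> k t * norm (x - y)"
    and "\<And>t x y p. t \<ge> 0 \<Longrightarrow> \<bar>H t x p - H t y p\<bar> \<le> k t * (1 + norm p) * norm (x - y)"
    and "\<And>t x p p'. t \<ge> 0 \<Longrightarrow> \<bar>H t x p - H t x p'\<bar> \<le> lam t x * norm (p - p')"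
    and "\<And>t x v. t \<ge> 0 \<Longrightarrow> v \<in> dom_Hstar H t x \<Longrightarrow> \<bar>Hstar H t x v\<bar> \<le> ereal (lam t x)"
  shows "cond_hH A H"
  unfolding cond_hH_def
  by (intro conjI; ((rule exI[of _ \<phi>]) |
      (rule exI[of _ lam], rule exI[of _ c], rule exI[of _ k], rule exI[of _ q]))?; simp add: assms)

lemma cond_hH_hamiltonian:
  assumes "cond_h A U f l"
  shows "cond_hH A (hamiltonian U f l)"
proof -
  obtain \<phi> c q k where
    U: "measurable_setvalued U" and ne: "\<And>t. t \<ge> 0 \<Longrightarrow> U t \<noteq> {}"
    and meas_f: "\<And>x u. (\<lambda>t. f t x u) \<in> borel_measurable (lebesgue_on {0..})"
    and meas_l: "\<And>x u. (\<lambda>t. l t x u) \<in> borel_measurable (lebesgue_on {0..})"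
    and cont_f: "\<And>t x. t \<ge> 0 \<Longrightarrow> continuous_on UNIV (f t x)"
    and cont_l: "\<And>t x. t \<ge> 0 \<Longrightarrow> continuous_on UNIV (l t x)"
    and \<phi>: "L1_pos \<phi>" "\<And>t x u. t \<ge> 0 \<Longrightarrow> \<phi> t \<le> l t x u"
    and c: "L1loc_nonneg c"
    and bound: "\<And>t x u. t \<ge> 0 \<Longrightarrow> u \<in> U t \<Longrightarrow> norm (f t x u) + \<bar>l t x u\<bar> \<le> c t * (1 + norm x)"
    and closed: "\<And>t x. t \<ge> 0 \<Longrightarrow> closed ((\<lambda>u. (f t x u, l t x u)) ` U t)"
    and convex: "\<And>t x. t \<ge> 0 \<Longrightarrow> convex {(f t x u, l t x u + r) | u r. u \<in> U t \<and> 0 \<le> r}"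
    and q: "Lscr_loc q"
    and bound_frontier: "\<And>t x u. t \<ge> 0 \<Longrightarrow> x \<in> frontier A \<Longrightarrow> u \<in> U t \<Longrightarrow>
           norm (f t x u) + \<bar>l t x u\<bar> \<le> q t"
    and k: "Lscr_loc k"
    and lip: "\<And>t x y u. t \<ge> 0 \<Longrightarrow> u \<in> U t \<Longrightarrow>
           norm (f t x u - f t y u) + \<bar>l t x u - l t y u\<bar> \<le> k t * norm (x - y)"
    using assms by (rule cond_hE) (rule that; assumption)
  let ?H = "hamiltonian U f l" and ?\<Lambda> = "sup_norm_dynamics_cost U f l"
  have k_nonneg: "0 \<le> k t" if "t \<ge> 0" for t
    using k that unfolding Lscr_loc_def L1loc_nonneg_def by blast
  have H_lip_state: "\<bar>?H t x p - ?H t y p\<bar> \<le> k t * (1 + norm p) * norm (x - y)"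
    if "t \<ge> 0" for t x y p
    using hamiltonian_lipschitz_state[where U=U and f=f and l=l and t=t and x=x and y=y,
        OF ne[OF that] bound[OF that] bound[OF that] lip[OF that]]
    by (simp add: mult_ac)
  have \<Lambda>_lip: "\<bar>?\<Lambda> t x - ?\<Lambda> t y\<bar> \<le> k t * norm (x - y)" if "t \<ge> 0" for t x y
    using sup_norm_dynamics_cost_lipschitz[where U=U and f=f and l=l and t=t and x=x and y=y,
        OF ne[OF that] bound[OF that] bound[OF that] lip[OF that]] .
  show ?thesis
  proof (rule cond_hHI[where \<phi>=\<phi> and lam="?\<Lambda>" and c=c and k=k and q=q])
    show "(\<lambda>t. ?H t x p) \<in> borel_measurable (lebesgue_on {0..})" for x p
      using U ne meas_f meas_l cont_f cont_l bound by (rule borel_measurable_hamiltonian)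
    show "(\<lambda>t. ?\<Lambda> t x) \<in> borel_measurable (lebesgue_on {0..})" for x
      using U ne meas_f meas_l cont_f cont_l bound by (rule borel_measurable_sup_norm_dynamics_cost)
    show "continuous_on UNIV (\<lambda>x. ?H t x p)" if "t \<ge> 0" for t p
      by (rule lipschitz_on_continuous_on[OF lipschitz_onI[of UNIV _ "k t * (1 + norm p)"]])
        (use H_lip_state[OF that] k_nonneg[OF that] in \<open>auto simp: dist_real_def dist_norm\<close>)
    show "continuous_on UNIV (?\<Lambda> t)" if "t \<ge> 0" for t
      by (rule lipschitz_on_continuous_on[OF lipschitz_onI[of UNIV _ "k t"]])
        (use \<Lambda>_lip[OF that] k_nonneg[OF that] in \<open>auto simp: dist_real_def dist_norm\<close>)
    show "convex_on UNIV (?H t x)" if "t \<ge> 0" for t x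
      using ne[OF that] bound[OF that] by (rule convex_on_hamiltonian)
    show "?H t x 0 \<le> - \<phi> t" if "t \<ge> 0" for t x
      using ne[OF that] by (rule hamiltonian_le) (simp add: \<phi>(2) that)
    show "0 \<le> ?\<Lambda> t x" if "t \<ge> 0" for t x
      using ne[OF that] bound[OF that] by (rule sup_norm_dynamics_cost_nonneg)
    show "?\<Lambda> t x \<le> c t * (1 + norm x)" if "t \<ge> 0" for t x
      using ne[OF that] bound[OF that] by (rule sup_norm_dynamics_cost_le)
    show "?\<Lambda> t x \<le> q t" if "t \<ge> 0" "x \<in> frontier A" for t x
      using ne[OF that(1)] bound_frontier[OF that] by (rule sup_norm_dynamics_cost_le)
    show "\<bar>?H t x p - ?H t x p'\<bar> \<le> ?\<Lambda> t x * norm (p - p')" if "t \<ge> 0" for t x p p'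
      using ne[OF that] bound[OF that] by (rule hamiltonian_lipschitz_momentum)
    show "\<bar>Hstar ?H t x v\<bar> \<le> ereal (?\<Lambda> t x)" if "t \<ge> 0" "v \<in> dom_Hstar ?H t x" for t x v
      using ne[OF that(1)] bound[OF that(1)] closed[OF that(1)] convex[OF that(1)] that(2)
      by (rule abs_Hstar_hamiltonian_le)
  qed (use \<phi>(1) c k q H_lip_state \<Lambda>_lip in auto)
qed

theorem theorem3p1:
  fixes A :: "'a::euclidean_space set"
    and U :: "real \<Rightarrow> 'b::euclidean_space set"
    and f :: "real \<Rightarrow> 'a \<Rightarrow> 'b \<Rightarrow> 'a"
    and l :: "real \<Rightarrow> 'a \<Rightarrow> 'b \<Rightarrow> real"
  assumes "A \<noteq> {}" and "closed A" and "cond_h A U f l"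
  shows "cond_hH A (hamiltonian U f l)
         \<and> (OPC A (\<lambda>t y. f t y ` U t) \<longrightarrow> OPC A (dom_Hstar (hamiltonian U f l)))
         \<and> (\<forall>t\<ge>0. \<forall>x.
              gph_Hstar (hamiltonian U f l) t x \<subseteq> (\<lambda>u. (f t x u, l t x u)) ` U t
            \<and> (\<lambda>u. (f t x u, l t x u)) ` U t \<subseteq> epi_Hstar (hamiltonian U f l) t x)"
proof -
  obtain c where ne: "\<And>t. t \<ge> 0 \<Longrightarrow> U t \<noteq> {}"
    and bound: "\<And>t x u. t \<ge> 0 \<Longrightarrow> u \<in> U t \<Longrightarrow> norm (f t x u) + \<bar>l t x u\<bar> \<le> c t * (1 + norm x)"
    and closed: "\<And>t x. t \<ge> 0 \<Longrightarrow> closed ((\<lambda>u. (f t x u, l t x u)) ` U t)"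
    and convex: "\<And>t x. t \<ge> 0 \<Longrightarrow> convex {(f t x u, l t x u + r) | u r. u \<in> U t \<and> 0 \<le> r}"
    using assms(3) by (rule cond_hE) (rule that; assumption)
  have "dom_Hstar (hamiltonian U f l) t y = f t y ` U t" if "t \<ge> 0" for t y
    using ne[OF that] bound[OF that] closed[OF that] convex[OF that] by (rule dom_Hstar_hamiltonian)
  then have "OPC A (\<lambda>t y. f t y ` U t) \<longleftrightarrow> OPC A (dom_Hstar (hamiltonian U f l))"
    by (intro OPC_cong) simp
  moreover have "gph_Hstar (hamiltonian U f l) t x \<subseteq> (\<lambda>u. (f t x u, l t x u)) ` U t"
    if "t \<ge> 0" for t x
    using ne[OF that] bound[OF that] closed[OF that] convex[OF that]
    by (rule gph_Hstar_hamiltonian_subset)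
  moreover have "(\<lambda>u. (f t x u, l t x u)) ` U t \<subseteq> epi_Hstar (hamiltonian U f l) t x"
    if "t \<ge> 0" for t x
    using bound[OF that] by (rule image_subset_epi_Hstar_hamiltonian)
  ultimately show ?thesis
    using cond_hH_hamiltonian[OF assms(3)] by blast
qed

end
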